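(* Let $G$ be a locally compact second countable group and $d\in\mathbb{N}$, and consider $\mathbb{R}$ as the trivial $G$-module. Under the map $\xi\mapsto\bar\xi$, $\bar\xi(g)=\xi(1,g)$, the image $d^0(C(G,\mathbb{R})^{G(d)})\subseteq C(G^2,\mathbb{R})$ maps bijectively onto the space of continuous polynomial maps $G\to\mathbb{R}$ of degree at most $d-1$ vanishing at the identity. Consequently $H^1_{(d)}(G,\mathbb{R})\cong\mathrm{Pol}_d(G)/\mathrm{Pol}_{d-1}(G)$. Further, the natural $G$-action on $H^1_{(d)}(G,\mathbb{R})$ is trivial.
   Context: $G$ acts on $C(G^{n+1},\mathbb{R})$ by $(g.f)(g_0,\dots,g_n)=f(g^{-1}g_0,\dots,g^{-1}g_n)$; $d^0f(g_0,g_1)=f(g_1)-f(g_0)$ and $d^n$ is the homogeneous bar differential. For a $G$-module $\mathcal{F}$, $\partial_g\xi=g.\xi-\xi$ and $\mathcal{F}^{G(d)}=\{\xi:\partial_{g_1}\cdots\partial_{g_d}\xi=0\ \forall g_i\}$. Polynomial cohomology: $H^n_{(d)}(G,\mathcal{E})=\ker(d^n|_{C(G^{n+1},\mathcal{E})^{G(d)}})/d^{n-1}(C(G^{n},\mathcal{E})^{G(d)})$. $\mathrm{Pol}_d(G)=C(G,\mathbb{R})^{G(d+1)}$, the continuous polynomial maps of degree at most $d$, where for functions $(\partial_g\xi)(h)=\xi(g^{-1}h)-\xi(h)$. *)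

theory Defs
  imports "HOL-Analysis.Analysis"
begin

text \<open>The group G is a type of class group_add (written additively, not assumed
commutative): the identity 1 is 0, products g h are g + h, inverses are -g.\<close>

definition topological_group :: "'g::{topological_space, group_add} itself \<Rightarrow> bool" where
  "topological_group _ \<longleftrightarrow>
     continuous_on UNIV (\<lambda>p::'g \<times> 'g. fst p + snd p) \<and> continuous_on UNIV (uminus :: 'g \<Rightarrow> 'g)"

definition act1 :: "'g::group_add \<Rightarrow> ('g \<Rightarrow> real) \<Rightarrow> ('g \<Rightarrow> real)" where
  "act1 g f = (\<lambda>h. f (- g + h))"

definition act2 :: "'g::group_add \<Rightarrow> ('g \<times> 'g \<Rightarrow> real) \<Rightarrow> ('g \<times> 'g \<Rightarrow> real)" where
  "act2 g f = (\<lambda>(g0, g1). f (- g + g0, - g + g1))"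

fun iter_diff :: "('g \<Rightarrow> ('a \<Rightarrow> real) \<Rightarrow> ('a \<Rightarrow> real)) \<Rightarrow> 'g list \<Rightarrow> ('a \<Rightarrow> real) \<Rightarrow> ('a \<Rightarrow> real)" where
  "iter_diff act [] \<xi> = \<xi>"
| "iter_diff act (g # gs) \<xi> = act g (iter_diff act gs \<xi>) - iter_diff act gs \<xi>"

definition poly_part :: "('g \<Rightarrow> ('a \<Rightarrow> real) \<Rightarrow> ('a \<Rightarrow> real)) \<Rightarrow> nat \<Rightarrow> ('a \<Rightarrow> real) set \<Rightarrow> ('a \<Rightarrow> real) set" where
  "poly_part act d F = {\<xi> \<in> F. \<forall>gs. length gs = d \<longrightarrow> iter_diff act gs \<xi> = (\<lambda>_. 0)}"

definition C1 :: "('g::topological_space \<Rightarrow> real) set" where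
  "C1 = {f. continuous_on UNIV f}"

definition C2 :: "('g::topological_space \<times> 'g \<Rightarrow> real) set" where
  "C2 = {f. continuous_on UNIV f}"

definition d0 :: "('g \<Rightarrow> real) \<Rightarrow> ('g \<times> 'g \<Rightarrow> real)" where
  "d0 f = (\<lambda>(g0, g1). f g1 - f g0)"

definition d1 :: "('g \<times> 'g \<Rightarrow> real) \<Rightarrow> ('g \<times> 'g \<times> 'g \<Rightarrow> real)" where
  "d1 f = (\<lambda>(g0, g1, g2). f (g1, g2) - f (g0, g2) + f (g0, g1))"

definition Pol :: "nat \<Rightarrow> ('g::{topological_space, group_add} \<Rightarrow> real) set" where
  "Pol d = poly_part act1 (Suc d) C1"

definition Z1 :: "nat \<Rightarrow> ('g::{topological_space, group_add} \<times> 'g \<Rightarrow> real) set" where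
  "Z1 d = {f \<in> poly_part act2 d C2. d1 f = (\<lambda>_. 0)}"

definition B1 :: "nat \<Rightarrow> ('g::{topological_space, group_add} \<times> 'g \<Rightarrow> real) set" where
  "B1 d = d0 ` poly_part act1 d C1"

text \<open>Isomorphism of quotient real vector spaces Z/B \<cong> P/Q (B \<subseteq> Z, Q \<subseteq> P
  linear subspaces of function spaces), expressed without quotient types:
  a linear map phi : Z -> P which induces a bijection Z/B -> P/Q, i.e. it is
  surjective modulo Q and phi z \<in> Q iff z \<in> B.\<close>

definition quotient_iso :: "('a \<Rightarrow> real) set \<Rightarrow> ('a \<Rightarrow> real) set \<Rightarrow> ('b \<Rightarrow> real) set \<Rightarrow> ('b \<Rightarrow> real) set \<Rightarrow> bool" where
  "quotient_iso Z B P Q \<longleftrightarrow>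
     (\<exists>\<phi>. (\<forall>z\<in>Z. \<phi> z \<in> P)
        \<and> (\<forall>z\<in>Z. \<forall>z'\<in>Z. \<forall>a b::real. \<phi> (\<lambda>x. a * z x + b * z' x) = (\<lambda>y. a * \<phi> z y + b * \<phi> z' y))
        \<and> (\<forall>p\<in>P. \<exists>z\<in>Z. p - \<phi> z \<in> Q)
        \<and> (\<forall>z\<in>Z. \<phi> z \<in> Q \<longleftrightarrow> z \<in> B))"

end

theory Submission
  imports Defs
begin

text \<open>Every 1-cocycle is the coboundary of its restriction
  \<open>\<psi> = \<xi>(0, -)\<close>, since \<open>d\<^sup>1\<xi>(0, a, b) = 0\<close> reads \<open>\<xi>(a, b) = \<psi> b - \<psi> a\<close>; and \<open>d\<^sup>0\<close> commutes
  with the \<open>G\<close>-action, so \<open>\<xi>\<close> is killed by \<open>d\<close>-fold differences iff all \<open>d\<close>-fold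
  differences of \<open>\<psi>\<close> are constant, i.e. iff \<open>\<psi> \<in> Pol d\<close>. Hence \<open>Z\<^sup>1 = d\<^sup>0(Pol d)\<close> and
  \<open>B\<^sup>1 = d\<^sup>0(Pol (d-1))\<close>, and \<open>\<xi> \<mapsto> \<xi>(0, -)\<close> identifies \<open>d\<^sup>0\<psi>\<close> with \<open>\<psi> - \<psi> 0\<close>, which
  gives the first two claims. For the third, \<open>g.d\<^sup>0\<psi> - d\<^sup>0\<psi> = d\<^sup>0(\<partial>\<^sub>g\<psi>)\<close>, and \<open>\<partial>\<^sub>g\<close>
  lowers the degree of a polynomial map by one.\<close>

lemma iter_diff_snoc: "iter_diff act (gs @ [g]) \<xi> = iter_diff act gs (act g \<xi> - \<xi>)"
  by (induction gs) auto

lemma iter_diff_act1_const: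
  "iter_diff act1 gs (\<lambda>_. c) = (if gs = [] then (\<lambda>_. c) else (\<lambda>_. 0))"
  by (induction gs) (auto simp: act1_def fun_eq_iff)

lemma iter_diff_act1_minus_const:
  "iter_diff act1 gs (\<lambda>x. f x - c) = (if gs = [] then (\<lambda>x. f x - c) else iter_diff act1 gs f)"
  by (induction gs) (auto simp: act1_def fun_eq_iff)

lemma act2_d0: "act2 g (d0 \<psi>) = d0 (act1 g \<psi>)"
  by (simp add: act2_def d0_def act1_def fun_eq_iff)

lemma d0_diff: "d0 (\<phi> - \<psi>) = d0 \<phi> - d0 \<psi>"
  by (simp add: d0_def fun_eq_iff)

lemma iter_diff_act2_d0: "iter_diff act2 gs (d0 \<psi>) = d0 (iter_diff act1 gs \<psi>)"
proof (induction gs)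
  case (Cons g gs)
  then show ?case by (metis iter_diff.simps(2) act2_d0 d0_diff)
qed simp

lemma d0_eq_0_iff: "d0 \<psi> = (\<lambda>_. 0) \<longleftrightarrow> (\<exists>c. \<psi> = (\<lambda>_. c))"
proof
  assume vanish: "d0 \<psi> = (\<lambda>_. 0)"
  have "\<psi> x = \<psi> y" for x y
    using fun_cong[OF vanish, of "(x, y)"] by (simp add: d0_def)
  then show "\<exists>c. \<psi> = (\<lambda>_. c)" by blast
qed (auto simp: d0_def fun_eq_iff)

lemma d1_d0: "d1 (d0 \<psi>) = (\<lambda>_. 0)"
  by (auto simp: d1_def d0_def fun_eq_iff)

lemma d0_slice_d0: "(\<lambda>g. d0 \<psi> (0, g)) = (\<lambda>g. \<psi> g - \<psi> 0)"
  by (simp add: d0_def)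

lemma d0_of_slice_d0: "d0 (\<lambda>g. d0 \<psi> (0, g)) = d0 \<psi>"
  by (simp add: d0_def fun_eq_iff)

lemma d0_in_C2: "\<psi> \<in> C1 \<Longrightarrow> d0 \<psi> \<in> C2"
  unfolding C1_def C2_def d0_def case_prod_unfold
  by (auto intro!: continuous_on_diff continuous_on_compose2[of UNIV \<psi>] continuous_intros)

lemma slice_in_C1: "\<xi> \<in> C2 \<Longrightarrow> (\<lambda>g. \<xi> (0, g)) \<in> C1"
  unfolding C1_def C2_def
  by (auto intro!: continuous_on_compose2[of UNIV \<xi>] continuous_intros)

lemma continuous_on_left_translation:
  assumes "topological_group TYPE('g::{topological_space, group_add})"
  shows "continuous_on UNIV (\<lambda>h::'g. a + h)"
proof -
  have "continuous_on UNIV (\<lambda>p::'g \<times> 'g. fst p + snd p)"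
    using assms by (simp add: topological_group_def)
  from continuous_on_compose2[OF this continuous_on_Pair[OF continuous_on_const continuous_on_id]]
  show ?thesis by simp
qed

lemma act1_in_C1:
  assumes "topological_group TYPE('g::{topological_space, group_add})" and "\<psi> \<in> C1"
  shows "act1 (g::'g) \<psi> \<in> C1"
  using assms(2) continuous_on_left_translation[OF assms(1), of "- g"]
  unfolding C1_def act1_def by (auto intro: continuous_on_compose2)

lemma Pol_iff_iter_diff_const:
  "\<psi> \<in> Pol d \<longleftrightarrow> \<psi> \<in> C1 \<and> (\<forall>gs. length gs = d \<longrightarrow> (\<exists>c. iter_diff act1 gs \<psi> = (\<lambda>_. c)))"
proof -
  have "(\<forall>g. act1 g \<phi> - \<phi> = (\<lambda>_. 0)) \<longleftrightarrow> (\<exists>c. \<phi> = (\<lambda>_. c))" for \<phi> :: "'a \<Rightarrow> real"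
  proof
    assume vanish: "\<forall>g. act1 g \<phi> - \<phi> = (\<lambda>_. 0)"
    have "\<phi> x = \<phi> 0" for x
      using fun_cong[OF spec[OF vanish, of x], of x] by (simp add: act1_def)
    then show "\<exists>c. \<phi> = (\<lambda>_. c)" by blast
  qed (auto simp: act1_def fun_eq_iff)
  moreover have "(\<forall>gs. length gs = Suc d \<longrightarrow> P gs) \<longleftrightarrow> (\<forall>gs. length gs = d \<longrightarrow> (\<forall>g. P (g # gs)))"
    for P :: "'a list \<Rightarrow> bool"
    by (metis length_Cons length_Suc_conv)
  ultimately show ?thesis
    by (simp add: Pol_def poly_part_def)
qed

lemma Pol_const: "(\<lambda>_. c) \<in> Pol d"
  by (simp add: Pol_def poly_part_def iter_diff_act1_const C1_def)

lemma Pol_minus_const: "\<psi> \<in> Pol d \<Longrightarrow> (\<lambda>x. \<psi> x - c) \<in> Pol d"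
  by (auto simp: Pol_def poly_part_def iter_diff_act1_minus_const C1_def intro: continuous_on_diff)

lemma Pol_diff_act1:
  assumes "topological_group TYPE('g::{topological_space, group_add})" and "\<psi> \<in> Pol d"
  shows "act1 (g::'g) \<psi> - \<psi> \<in> poly_part act1 d C1"
proof -
  have "\<psi> \<in> C1" using assms(2) by (simp add: Pol_def poly_part_def)
  then have "act1 g \<psi> - \<psi> \<in> C1"
    using act1_in_C1[OF assms(1)] unfolding C1_def fun_diff_def by (auto intro: continuous_on_diff)
  moreover have "iter_diff act1 gs (act1 g \<psi> - \<psi>) = (\<lambda>_. 0)" if "length gs = d" for gs
    using assms(2) that unfolding Pol_def poly_part_def iter_diff_snoc[symmetric] by simp
  ultimately show ?thesis by (simp add: poly_part_def)
qed

lemma Z1_eq_d0_slice: "\<xi> \<in> Z1 d \<Longrightarrow> \<xi> = d0 (\<lambda>g. \<xi> (0, g))"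
proof -
  assume "\<xi> \<in> Z1 d"
  then have cocycle: "d1 \<xi> (0, a, b) = 0" for a b by (simp add: Z1_def)
  have "\<xi> (a, b) = d0 (\<lambda>g. \<xi> (0, g)) (a, b)" for a b
    using cocycle[of a b] by (simp add: d1_def d0_def)
  then show ?thesis by (intro ext) (metis surj_pair)
qed

lemma d0_in_Z1_iff: "d0 \<psi> \<in> Z1 d \<longleftrightarrow> \<psi> \<in> Pol d" if "\<psi> \<in> C1"
  using that d0_in_C2[OF that]
  by (simp add: Z1_def poly_part_def Pol_iff_iter_diff_const iter_diff_act2_d0 d0_eq_0_iff d1_d0)

lemma Z1_eq_d0_image_Pol: "Z1 d = d0 ` Pol d"
proof (intro equalityI subsetI)
  fix \<xi> assume "\<xi> \<in> Z1 d"
  moreover from this have "(\<lambda>g. \<xi> (0, g)) \<in> C1"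
    by (auto simp: Z1_def poly_part_def intro: slice_in_C1)
  ultimately show "\<xi> \<in> d0 ` Pol d"
    using Z1_eq_d0_slice d0_in_Z1_iff by (metis image_eqI)
next
  fix \<xi> assume "\<xi> \<in> d0 ` Pol d"
  then show "\<xi> \<in> Z1 d"
    using d0_in_Z1_iff by (auto simp: Pol_def poly_part_def)
qed

lemma B1_eq_d0_image_Pol: "d \<ge> 1 \<Longrightarrow> B1 d = d0 ` Pol (d - 1)"
  by (simp add: B1_def Pol_def)

lemma bij_betw_slice_B1:
  assumes "d \<ge> 1"
  shows "bij_betw (\<lambda>\<xi> g. \<xi> (0, g)) (B1 d) {p \<in> Pol (d - 1). p 0 = 0}"
proof (rule bij_betw_imageI)
  show "inj_on (\<lambda>\<xi> g. \<xi> (0, g)) (B1 d)"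
    by (rule inj_onI) (metis B1_def d0_of_slice_d0 imageE)
  show "(\<lambda>\<xi> g. \<xi> (0, g)) ` B1 d = {p \<in> Pol (d - 1). p 0 = 0}"
    unfolding B1_eq_d0_image_Pol[OF assms]
  proof (intro equalityI subsetI)
    fix p assume "p \<in> {p \<in> Pol (d - 1). p 0 = 0}"
    then have "p = (\<lambda>g. d0 p (0, g))" "p \<in> Pol (d - 1)" by (auto simp: d0_slice_d0)
    then show "p \<in> (\<lambda>\<xi> g. \<xi> (0, g)) ` d0 ` Pol (d - 1)" by blast
  qed (auto simp: d0_def Pol_minus_const)
qed

lemma quotient_iso_Z1_B1:
  assumes "d \<ge> 1"
  shows "quotient_iso (Z1 d :: ('g::{topological_space, group_add} \<times> 'g \<Rightarrow> real) set) (B1 d)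
           (Pol d :: ('g \<Rightarrow> real) set) (Pol (d - 1))"
  unfolding quotient_iso_def
proof (rule exI[of _ "\<lambda>\<xi> g. \<xi> (0, g)"], intro conjI ballI allI)
  fix \<xi> assume "\<xi> \<in> Z1 d"
  then obtain \<psi> where \<psi>: "\<psi> \<in> Pol d" "\<xi> = d0 \<psi>" by (auto simp: Z1_eq_d0_image_Pol)
  then show "(\<lambda>g. \<xi> (0, g)) \<in> Pol d" by (simp add: d0_slice_d0 Pol_minus_const)
  show "(\<lambda>g. \<xi> (0, g)) \<in> Pol (d - 1) \<longleftrightarrow> \<xi> \<in> B1 d"
  proof
    assume "(\<lambda>g. \<xi> (0, g)) \<in> Pol (d - 1)"
    then show "\<xi> \<in> B1 d"
      by (metis B1_eq_d0_image_Pol[OF assms] \<psi>(2) d0_of_slice_d0 image_eqI)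
  next
    assume "\<xi> \<in> B1 d"
    then show "(\<lambda>g. \<xi> (0, g)) \<in> Pol (d - 1)"
      by (auto simp: B1_eq_d0_image_Pol[OF assms] d0_slice_d0 Pol_minus_const)
  qed
next
  fix p assume "p \<in> Pol d"
  moreover have "p - (\<lambda>g. d0 p (0, g)) = (\<lambda>_. p 0)" by (simp add: d0_def fun_eq_iff)
  ultimately show "\<exists>\<xi>\<in>Z1 d. p - (\<lambda>g. \<xi> (0, g)) \<in> Pol (d - 1)"
    by (metis Pol_const Z1_eq_d0_image_Pol imageI)
qed simp

lemma act2_Z1_diff_in_B1:
  assumes "topological_group TYPE('g::{topological_space, group_add})"
    and "\<xi> \<in> Z1 d"
  shows "act2 (g::'g) \<xi> - \<xi> \<in> B1 d"
proof -
  obtain \<psi> where "\<psi> \<in> Pol d" "\<xi> = d0 \<psi>"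
    using assms(2) by (auto simp: Z1_eq_d0_image_Pol)
  then have "act2 g \<xi> - \<xi> = d0 (act1 g \<psi> - \<psi>)" "act1 g \<psi> - \<psi> \<in> poly_part act1 d C1"
    using Pol_diff_act1[OF assms(1)] by (simp_all add: act2_d0 d0_diff)
  then show ?thesis by (simp add: B1_def)
qed

theorem proposition7p5:
  fixes d :: nat
  assumes "topological_group TYPE('g::{t2_space, second_countable_topology, group_add})"
    and "locally_compact_space (euclidean :: 'g topology)"
    and "d \<ge> 1"
  shows "bij_betw (\<lambda>\<xi> g. \<xi> (0, g)) (B1 d :: ('g \<times> 'g \<Rightarrow> real) set) {p \<in> Pol (d - 1). p 0 = 0}
       \<and> quotient_iso (Z1 d :: ('g \<times> 'g \<Rightarrow> real) set) (B1 d) (Pol d :: ('g \<Rightarrow> real) set) (Pol (d - 1))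
       \<and> (\<forall>g::'g. \<forall>f \<in> Z1 d. act2 g f - f \<in> B1 d)"
  using bij_betw_slice_B1[OF assms(3)] quotient_iso_Z1_B1[OF assms(3)]
    act2_Z1_diff_in_B1[OF assms(1)] by blast

end
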